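(* Let $0<p<\infty$, $0<r<1$, and let $\mathcal{S}=\{S_k\}_{k\ge0}$ be a sparse sequence. Then $$\|\mathcal{C}_\mathcal{S}f\|_{L^p(\Omega)}\lesssim\|f\|_{L^p(\Omega)}\qquad\text{for all }f\in L^p(\Omega),$$ where $\mathcal{C}_\mathcal{S}f:=\sum_{k\ge0}\mathbf{1}_{S_k}\mathsf{P}^r_k(f)$ and the implicit constant is independent of $f$ and $\mathcal{S}$.
   Context: $(\Omega,\mathcal{F},\mu)$ is a probability space with a regular filtration $\{\mathcal{F}_k\}_{k\ge0}$ generating $\mathcal{F}$ (i.e. there is $R>0$ with $\mathsf{E}_kf\le R\,\mathsf{E}_{k-1}f$ a.e. for nonnegative integrable $f$), $\mathsf{E}_k=\mathsf{E}[\cdot|\mathcal{F}_k]$. $\mathsf{P}^r_kg(x):=\inf\{t\in\mathbb{Q}:\mathsf{E}_k[\mathbf{1}_{\{g>t\}}](x)\le r\}$. An adapted sequence $\{S_k\}$ ($S_k\in\mathcal{F}_k$) is sparse if for every $k$ and every $\mathcal{F}_k$-measurable $A\subseteq S_k$, $\mu(A\setminus\bigcup_{m\ge k+1}S_m)\ge\frac12\mu(A)$. *)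

theory Defs
  imports "HOL-Probability.Probability"
begin

definition generating_filtration :: "'a measure \<Rightarrow> (nat \<Rightarrow> 'a measure) \<Rightarrow> bool" where
  "generating_filtration M F \<longleftrightarrow>
     (\<forall>k. subalgebra M (F k)) \<and>
     (\<forall>k. sets (F k) \<subseteq> sets (F (Suc k))) \<and>
     sets M = sigma_sets (space M) (\<Union>k. sets (F k))"

definition regular_filtration :: "'a measure \<Rightarrow> (nat \<Rightarrow> 'a measure) \<Rightarrow> bool" where
  "regular_filtration M F \<longleftrightarrow>
     (\<exists>R>0. \<forall>k\<ge>1. \<forall>f. integrable M f \<and> (\<forall>x\<in>space M. f x \<ge> 0) \<longrightarrow>
        (AE x in M. real_cond_exp M (F k) f x \<le> R * real_cond_exp M (F (k - 1)) f x))"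

definition Pr_op :: "'a measure \<Rightarrow> (nat \<Rightarrow> 'a measure) \<Rightarrow> real \<Rightarrow> nat \<Rightarrow> ('a \<Rightarrow> real) \<Rightarrow> 'a \<Rightarrow> real" where
  "Pr_op M F r k g x =
     Inf {t::real. t \<in> \<rat> \<and>
        real_cond_exp M (F k) (indicator {y \<in> space M. g y > t}) x \<le> r}"

definition sparse_seq :: "'a measure \<Rightarrow> (nat \<Rightarrow> 'a measure) \<Rightarrow> (nat \<Rightarrow> 'a set) \<Rightarrow> bool" where
  "sparse_seq M F S \<longleftrightarrow>
     (\<forall>k. S k \<in> sets (F k)) \<and>
     (\<forall>k A. A \<in> sets (F k) \<and> A \<subseteq> S k \<longrightarrow>
        measure M (A - (\<Union>m\<in>{Suc k..}. S m)) \<ge> 1/2 * measure M A)"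

definition sparse_op :: "'a measure \<Rightarrow> (nat \<Rightarrow> 'a measure) \<Rightarrow> real \<Rightarrow> (nat \<Rightarrow> 'a set) \<Rightarrow> ('a \<Rightarrow> real) \<Rightarrow> 'a \<Rightarrow> real" where
  "sparse_op M F r S f x = (\<Sum>k. indicator (S k) x * Pr_op M F r k f x)"

end

theory Submission
  imports Defs
begin

(*
  Let h = |f|^(p/2). Conditional Markov inequalities give |P^r_k f| <= u_k := (E_k h / rho)^(2/p)
  with rho = min r (1 - r), so C_S f is dominated by the sum of 1_{S_k} u_k. The partial sums
  Phi_n of this sum are controlled telescopically: Phi_(k+1)^p - Phi_k^p is at most 1_{S_k} b_k
  with b_k F_k-measurable, and sparseness lets each integral of 1_{S_k} b_k be moved, at the
  cost of a factor 2, onto the pairwise disjoint sets S_k minus the later S_m. This bounds the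
  integral of Phi_n^p by a constant times that of (max_k u_k)^p = (max_k E_k h)^2 / rho^2; for
  p >= 1 a multiple of the integral of Phi_n^p reappears and is absorbed via Young's inequality.
  Doob's L^2 maximal inequality finishes: the integral of (max_k E_k h)^2 is at most 4 times
  the integral of h^2 = |f|^p.
*)

lemma powr_add_le_tangent:
  fixes a b p :: real
  assumes "1 \<le> p" "0 \<le> a" "0 \<le> b"
  shows "(a + b) powr p \<le> a powr p + p * b * (a + b) powr (p - 1)"
proof (cases "a = 0")
  case True
  have "b powr p = b * b powr (p - 1)"
    using assms by (cases "b = 0") (simp_all add: powr_mult_base)
  also have "\<dots> \<le> p * b * b powr (p - 1)"
    using assms by (intro mult_right_mono) (auto intro: mult_right_mono[of 1 p b, simplified])
  finally show ?thesis using True by simp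
next
  case False
  then have "a > 0" "a + b > 0" using assms by auto
  then have "a powr p - (a + b) powr p \<ge> (p * (a + b) powr (p - 1)) * (a - (a + b))"
    using powr_convex[OF assms(1)]
    by (intro convex_on_imp_above_tangent[where A="{0<..}"])
      (auto intro!: has_field_derivative_at_within has_real_derivative_powr simp: interior_open)
  then show ?thesis by (simp add: algebra_simps)
qed

lemma powr_add_le_add_powr:
  fixes a b p :: real
  assumes "0 < p" "p \<le> 1" "0 \<le> a" "0 \<le> b"
  shows "(a + b) powr p \<le> a powr p + b powr p"
proof (cases "a + b = 0")
  case True
  then show ?thesis using assms by simp
next
  case False
  then have ab: "a + b > 0" using assms by linarith
  have "1 = a / (a + b) + b / (a + b)"
    using ab by (simp add: add_divide_distrib[symmetric])
  also have "\<dots> \<le> (a / (a + b)) powr p + (b / (a + b)) powr p"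
    using assms ab powr_mono'[of p 1 "a / (a + b)"] powr_mono'[of p 1 "b / (a + b)"] by simp
  also have "\<dots> = (a powr p + b powr p) / (a + b) powr p"
    using assms ab by (simp add: powr_divide add_divide_distrib)
  finally show ?thesis using ab by (simp add: le_divide_eq)
qed

lemma mult_powr_le_young:
  fixes a b p K :: real
  assumes "1 \<le> p" "0 < K" "0 \<le> a" "0 \<le> b"
  shows "a * b powr (p - 1) \<le> K powr (p - 1) * a powr p + b powr p / K"
proof (cases "b \<le> K * a")
  case True
  have "a * b powr (p - 1) \<le> a * (K * a) powr (p - 1)"
    using assms True by (intro mult_left_mono powr_mono2) auto
  also have "\<dots> = K powr (p - 1) * a powr p"
    using assms by (cases "a = 0") (auto simp: powr_mult powr_mult_base)
  finally show ?thesis using assms by (smt (verit) divide_nonneg_nonneg powr_ge_zero)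
next
  case False
  then have "a * b powr (p - 1) \<le> b / K * b powr (p - 1)"
    using assms by (intro mult_right_mono) (auto simp: le_divide_eq mult.commute)
  also have "\<dots> = b powr p / K"
    using assms False by (cases "b = 0") (auto simp: powr_mult_base)
  finally show ?thesis using assms by (smt (verit) mult_nonneg_nonneg powr_ge_zero)
qed

definition powr_step :: "real \<Rightarrow> real \<Rightarrow> real \<Rightarrow> real" where
  "powr_step p a t = (if 1 \<le> p then p * a * t powr (p - 1) else a powr p)"

lemma powr_add_le_powr_step:
  assumes "0 < p" "0 \<le> s" "0 \<le> a"
  shows "(s + a) powr p \<le> s powr p + powr_step p a (s + a)"
  using assms powr_add_le_tangent[of p s a] powr_add_le_add_powr[of p s a]
  by (auto simp: powr_step_def)

lemma powr_step_nonneg: "0 < p \<Longrightarrow> 0 \<le> a \<Longrightarrow> 0 \<le> powr_step p a t"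
  by (simp add: powr_step_def)

lemma powr_step_mono:
  assumes "0 < p" "0 \<le> a" "a \<le> a'" "0 \<le> t" "t \<le> t'"
  shows "powr_step p a t \<le> powr_step p a' t'"
  using assms by (auto simp: powr_step_def intro!: mult_mono powr_mono2)

lemma powr_step_indicator:
  "0 < p \<Longrightarrow> powr_step p (indicator S x * a) t = indicator S x * powr_step p a t"
  by (simp add: powr_step_def indicator_def)

lemma sum_powr_le_sum_powr_step:
  assumes "0 < p" "\<And>k. 0 \<le> a k"
  shows "(\<Sum>k<n. a k) powr p \<le> (\<Sum>k<n. powr_step p (a k) (\<Sum>j<Suc k. a j))"
proof (induction n)
  case (Suc n)
  have "(\<Sum>k<Suc n. a k) powr p \<le> (\<Sum>k<n. a k) powr p + powr_step p (a n) (\<Sum>j<Suc n. a j)"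
    using powr_add_le_powr_step[OF assms(1), of "\<Sum>k<n. a k" "a n"] assms(2) by (simp add: sum_nonneg)
  with Suc show ?case by simp
qed simp

lemma sum_indicator_powr_le_powr_step:
  assumes "0 < p" "\<And>k. 0 \<le> u k"
  shows "(\<Sum>k<n. indicator (S k) x * u k) powr p
    \<le> (\<Sum>k<n. indicator (S k) x * powr_step p (u k) (\<Sum>j<Suc k. indicator (S j) x * u j))"
proof -
  have "(\<Sum>k<n. indicator (S k) x * u k) powr p
      \<le> (\<Sum>k<n. powr_step p (indicator (S k) x * u k) (\<Sum>j<Suc k. indicator (S j) x * u j))"
    using sum_powr_le_sum_powr_step[OF assms(1), of "\<lambda>k. indicator (S k) x * u k" n] assms(2) by simp
  also have "\<dots> = (\<Sum>k<n. indicator (S k) x * powr_step p (u k) (\<Sum>j<Suc k. indicator (S j) x * u j))"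
    by (simp only: powr_step_indicator[OF assms(1)])
  finally show ?thesis .
qed

lemma abs_rat_quantile_le:
  fixes e :: "real \<Rightarrow> real" and G r \<rho> s :: real
  assumes "0 < s" "0 < \<rho>" "\<rho> \<le> r" "\<rho> \<le> 1 - r"
    and upper: "\<And>q. q \<in> \<rat> \<Longrightarrow> 0 < q \<Longrightarrow> e q \<le> G / q powr s"
    and lower: "\<And>q. q \<in> \<rat> \<Longrightarrow> q < 0 \<Longrightarrow> 1 - G / (- q) powr s \<le> e q"
  shows "\<bar>Inf {t. t \<in> \<rat> \<and> e t \<le> r}\<bar> \<le> (max 0 G / \<rho>) powr (1 / s)"
proof -
  define B where "B = (max 0 G / \<rho>) powr (1 / s)"
  define T where "T = {t. t \<in> \<rat> \<and> e t \<le> r}"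
  have "B \<ge> 0" unfolding B_def by simp
  have small: "G / q powr s < \<rho>" if "B < q" for q
  proof -
    have "max 0 G / \<rho> = B powr s"
      unfolding B_def using assms by (simp add: powr_powr)
    also have "\<dots> < q powr s"
      using that \<open>B \<ge> 0\<close> assms by (intro powr_less_mono2) auto
    finally show ?thesis
      using assms that \<open>B \<ge> 0\<close> by (simp add: divide_less_eq mult.commute)
  qed
  have above: "q \<in> T" if "q \<in> \<rat>" "B < q" for q
  proof -
    have "e q \<le> G / q powr s" using upper that \<open>B \<ge> 0\<close> by simp
    then show ?thesis using small[OF that(2)] that assms unfolding T_def by simp
  qed
  have below: "- B \<le> t" if "t \<in> T" for t
  proof (rule ccontr)
    assume "\<not> - B \<le> t"
    then have "B < - t" "t < 0" using \<open>B \<ge> 0\<close> by auto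
    moreover have "t \<in> \<rat>" "e t \<le> r" using that unfolding T_def by auto
    ultimately have "1 - G / (- t) powr s \<le> r" "G / (- t) powr s < \<rho>"
      using lower[of t] small[of "- t"] by auto
    then show False using assms by linarith
  qed
  obtain q0 where "q0 \<in> \<rat>" "B < q0" using Rats_dense_in_real[of B "B + 1"] by auto
  then have "T \<noteq> {}" using above by auto
  have "bdd_below T" using below by (auto simp: bdd_below_def)
  have "- B \<le> Inf T" using \<open>T \<noteq> {}\<close> below by (intro cInf_greatest) auto
  moreover have "Inf T \<le> B"
  proof (rule ccontr)
    assume "\<not> Inf T \<le> B"
    then obtain q where "q \<in> \<rat>" "B < q" "q < Inf T" using Rats_dense_in_real[of B "Inf T"] by auto
    then show False using above \<open>bdd_below T\<close> cInf_lower by (metis not_le)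
  qed
  ultimately show ?thesis unfolding B_def T_def by simp
qed

lemma summable_abs_suminf_powr_le:
  fixes g a :: "nat \<Rightarrow> real"
  assumes "0 < p" and dom: "\<And>k. \<bar>g k\<bar> \<le> a k" and partial: "\<And>n. (\<Sum>k<n. a k) powr p \<le> c"
  shows "summable g \<and> \<bar>suminf g\<bar> powr p \<le> c"
proof -
  have a_nonneg: "0 \<le> a k" for k using dom[of k] by linarith
  have partial_le: "(\<Sum>k<n. a k) \<le> c powr (1 / p)" for n
  proof -
    have "(\<Sum>k<n. a k) = ((\<Sum>k<n. a k) powr p) powr (1 / p)"
      using \<open>0 < p\<close> a_nonneg by (simp add: powr_powr sum_nonneg)
    also have "\<dots> \<le> c powr (1 / p)"
      using \<open>0 < p\<close> partial[of n] by (intro powr_mono2) auto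
    finally show ?thesis .
  qed
  have "summable a"
  proof (rule bounded_imp_summable[OF a_nonneg])
    show "sum a {..n} \<le> c powr (1 / p)" for n
      using partial_le[of "Suc n"] by (simp only: lessThan_Suc_atMost)
  qed
  then have "summable (\<lambda>k. \<bar>g k\<bar>)"
    by (rule summable_comparison_test') (use dom in simp)
  then have "summable g" by (rule summable_rabs_cancel)
  have "\<bar>suminf g\<bar> \<le> suminf a"
    using summable_rabs[OF \<open>summable (\<lambda>k. \<bar>g k\<bar>)\<close>] suminf_le[OF dom \<open>summable (\<lambda>k. \<bar>g k\<bar>)\<close> \<open>summable a\<close>]
    by linarith
  also have "\<dots> \<le> c powr (1 / p)"
    using \<open>summable a\<close> partial_le by (rule suminf_le_const)
  finally have "\<bar>suminf g\<bar> powr p \<le> (c powr (1 / p)) powr p"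
    using \<open>0 < p\<close> by (intro powr_mono2) auto
  also have "\<dots> = c"
    using \<open>0 < p\<close> partial[of 0] by (simp add: powr_powr)
  finally show ?thesis using \<open>summable g\<close> by simp
qed

lemma ennreal_le_of_double_le_add:
  fixes x y :: ennreal
  assumes "x \<noteq> \<infinity>" "2 * x \<le> y + x"
  shows "x \<le> y"
  using assms by (simp add: mult_2 ennreal_add_left_cancel_le add.commute)

lemma ennreal_power2_eq_nn_integral:
  fixes a :: real
  assumes "0 \<le> a"
  shows "ennreal (a\<^sup>2) = (\<integral>\<^sup>+ t. indicator {0..a} t * ennreal (2 * t) \<partial>lborel)"
proof -
  have "((\<lambda>t. 2 * t) has_integral (a\<^sup>2 - 0\<^sup>2)) {0..a}"
    using assms by (intro fundamental_theorem_of_calculus)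
      (auto intro!: derivative_eq_intros simp: has_real_derivative_iff_has_vector_derivative[symmetric])
  then have "((\<lambda>t. if t \<in> {0..a} then 2 * t else 0) has_integral a\<^sup>2) UNIV"
    by (subst has_integral_restrict_UNIV) simp
  then have "(\<integral>\<^sup>+ t. ennreal (if t \<in> {0..a} then 2 * t else 0) \<partial>lborel) = a\<^sup>2"
    by (intro nn_integral_has_integral_lborel) auto
  moreover have "(\<lambda>t. ennreal (if t \<in> {0..a} then 2 * t else 0)) = (\<lambda>t. indicator {0..a} t * ennreal (2 * t))"
    by (auto simp: indicator_def)
  ultimately show ?thesis by simp
qed

lemma (in sigma_finite_measure) nn_integral_square_le_of_weak_type:
  fixes \<phi> h :: "'a \<Rightarrow> real"
  assumes [measurable]: "\<phi> \<in> borel_measurable M" "h \<in> borel_measurable M"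
    and \<phi>_nonneg: "\<And>x. 0 \<le> \<phi> x"
    and weak: "\<And>t. 0 < t \<Longrightarrow> ennreal t * emeasure M {x \<in> space M. t \<le> \<phi> x}
      \<le> (\<integral>\<^sup>+ x. indicator {x \<in> space M. t \<le> \<phi> x} x * ennreal (h x) \<partial>M)"
  shows "(\<integral>\<^sup>+ x. ennreal ((\<phi> x)\<^sup>2) \<partial>M) \<le> (\<integral>\<^sup>+ x. 2 * ennreal (h x) * ennreal (\<phi> x) \<partial>M)"
proof -
  interpret pair_sigma_finite M lborel by unfold_locales
  define L where "L t = {x \<in> space M. t \<le> \<phi> x}" for t
  have [measurable]: "L t \<in> sets M" for t unfolding L_def by measurable
  have slice: "(\<integral>\<^sup>+ x. indicator {0..\<phi> x} t * ennreal (2 * t) \<partial>M)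
      \<le> (\<integral>\<^sup>+ x. indicator {0..\<phi> x} t * (2 * ennreal (h x)) \<partial>M)" for t
  proof (cases "0 < t")
    case True
    have "(\<integral>\<^sup>+ x. indicator {0..\<phi> x} t * ennreal (2 * t) \<partial>M) = ennreal (2 * t) * emeasure M (L t)"
      using True by (subst nn_integral_cmult_indicator[symmetric])
        (auto intro!: nn_integral_cong simp: L_def indicator_def)
    also have "\<dots> = 2 * (ennreal t * emeasure M (L t))"
      using True by (simp add: ennreal_mult mult.assoc)
    also have "\<dots> \<le> 2 * (\<integral>\<^sup>+ x. indicator (L t) x * ennreal (h x) \<partial>M)"
      using weak[OF True] unfolding L_def by (intro mult_left_mono) auto
    also have "\<dots> = (\<integral>\<^sup>+ x. indicator {0..\<phi> x} t * (2 * ennreal (h x)) \<partial>M)"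
      using True by (subst nn_integral_cmult[symmetric])
        (auto intro!: nn_integral_cong simp: L_def indicator_def)
    finally show ?thesis .
  qed (auto intro!: nn_integral_mono simp: indicator_def)
  have "(\<integral>\<^sup>+ x. ennreal ((\<phi> x)\<^sup>2) \<partial>M)
      = (\<integral>\<^sup>+ x. \<integral>\<^sup>+ t. indicator {0..\<phi> x} t * ennreal (2 * t) \<partial>lborel \<partial>M)"
    using \<phi>_nonneg by (simp add: ennreal_power2_eq_nn_integral)
  also have "\<dots> = (\<integral>\<^sup>+ t. \<integral>\<^sup>+ x. indicator {0..\<phi> x} t * ennreal (2 * t) \<partial>M \<partial>lborel)"
    by (rule Fubini'[symmetric]) (simp add: indicator_def)
  also have "\<dots> \<le> (\<integral>\<^sup>+ t. \<integral>\<^sup>+ x. indicator {0..\<phi> x} t * (2 * ennreal (h x)) \<partial>M \<partial>lborel)"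
    by (intro nn_integral_mono slice)
  also have "\<dots> = (\<integral>\<^sup>+ x. \<integral>\<^sup>+ t. 2 * ennreal (h x) * indicator {0..\<phi> x} t \<partial>lborel \<partial>M)"
    by (subst Fubini') (simp_all add: indicator_def mult.commute)
  also have "\<dots> = (\<integral>\<^sup>+ x. 2 * ennreal (h x) * ennreal (\<phi> x) \<partial>M)"
    using \<phi>_nonneg by (simp add: nn_integral_cmult_indicator)
  finally show ?thesis .
qed

lemma (in finite_measure) nn_integral_square_le_four_of_weak_type_finite:
  fixes \<phi> h :: "'a \<Rightarrow> real"
  assumes [measurable]: "\<phi> \<in> borel_measurable M" "h \<in> borel_measurable M"
    and \<phi>_nonneg: "\<And>x. 0 \<le> \<phi> x" and h_nonneg: "\<And>x. 0 \<le> h x"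
    and weak: "\<And>t. 0 < t \<Longrightarrow> ennreal t * emeasure M {x \<in> space M. t \<le> \<phi> x}
      \<le> (\<integral>\<^sup>+ x. indicator {x \<in> space M. t \<le> \<phi> x} x * ennreal (h x) \<partial>M)"
    and finite: "(\<integral>\<^sup>+ x. ennreal ((\<phi> x)\<^sup>2) \<partial>M) \<noteq> \<infinity>"
  shows "(\<integral>\<^sup>+ x. ennreal ((\<phi> x)\<^sup>2) \<partial>M) \<le> 4 * (\<integral>\<^sup>+ x. ennreal ((h x)\<^sup>2) \<partial>M)"
proof (rule ennreal_le_of_double_le_add[OF finite])
  have "2 * (\<integral>\<^sup>+ x. ennreal ((\<phi> x)\<^sup>2) \<partial>M) \<le> 2 * (\<integral>\<^sup>+ x. 2 * ennreal (h x) * ennreal (\<phi> x) \<partial>M)"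
    using nn_integral_square_le_of_weak_type[OF _ _ \<phi>_nonneg weak] by (intro mult_left_mono) simp_all
  also have "\<dots> = (\<integral>\<^sup>+ x. 4 * ennreal (h x) * ennreal (\<phi> x) \<partial>M)"
    by (subst nn_integral_cmult[symmetric]) (simp_all add: mult.assoc[symmetric])
  also have "\<dots> \<le> (\<integral>\<^sup>+ x. 4 * ennreal ((h x)\<^sup>2) + ennreal ((\<phi> x)\<^sup>2) \<partial>M)"
  proof (intro nn_integral_mono)
    fix x
    have "4 * h x * \<phi> x \<le> 4 * (h x)\<^sup>2 + (\<phi> x)\<^sup>2"
      using sum_squares_ge_zero[of "2 * h x - \<phi> x" 0] by (simp add: power2_eq_square algebra_simps)
    then have "ennreal (4 * h x * \<phi> x) \<le> ennreal (4 * (h x)\<^sup>2) + ennreal ((\<phi> x)\<^sup>2)"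
      by (simp add: ennreal_plus[symmetric] del: ennreal_plus)
    then show "4 * ennreal (h x) * ennreal (\<phi> x) \<le> 4 * ennreal ((h x)\<^sup>2) + ennreal ((\<phi> x)\<^sup>2)"
      using h_nonneg[of x] \<phi>_nonneg[of x] by (simp add: ennreal_mult)
  qed
  also have "\<dots> = 4 * (\<integral>\<^sup>+ x. ennreal ((h x)\<^sup>2) \<partial>M) + (\<integral>\<^sup>+ x. ennreal ((\<phi> x)\<^sup>2) \<partial>M)"
    by (simp add: nn_integral_add nn_integral_cmult)
  finally show "2 * (\<integral>\<^sup>+ x. ennreal ((\<phi> x)\<^sup>2) \<partial>M)
      \<le> 4 * (\<integral>\<^sup>+ x. ennreal ((h x)\<^sup>2) \<partial>M) + (\<integral>\<^sup>+ x. ennreal ((\<phi> x)\<^sup>2) \<partial>M)" .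
qed

lemma (in finite_measure) nn_integral_square_le_four_of_weak_type:
  fixes \<phi> h :: "'a \<Rightarrow> real"
  assumes [measurable]: "\<phi> \<in> borel_measurable M" "h \<in> borel_measurable M"
    and \<phi>_nonneg: "\<And>x. 0 \<le> \<phi> x" and h_nonneg: "\<And>x. 0 \<le> h x"
    and weak: "\<And>t. 0 < t \<Longrightarrow> ennreal t * emeasure M {x \<in> space M. t \<le> \<phi> x}
      \<le> (\<integral>\<^sup>+ x. indicator {x \<in> space M. t \<le> \<phi> x} x * ennreal (h x) \<partial>M)"
  shows "(\<integral>\<^sup>+ x. ennreal ((\<phi> x)\<^sup>2) \<partial>M) \<le> 4 * (\<integral>\<^sup>+ x. ennreal ((h x)\<^sup>2) \<partial>M)"
proof -
  define \<psi> where "\<psi> K x = min (\<phi> x) (real K)" for K x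
  have [measurable]: "\<psi> K \<in> borel_measurable M" for K unfolding \<psi>_def by measurable
  have truncated: "(\<integral>\<^sup>+ x. ennreal ((\<psi> K x)\<^sup>2) \<partial>M) \<le> 4 * (\<integral>\<^sup>+ x. ennreal ((h x)\<^sup>2) \<partial>M)" for K
  proof (rule nn_integral_square_le_four_of_weak_type_finite)
    show "ennreal t * emeasure M {x \<in> space M. t \<le> \<psi> K x}
        \<le> (\<integral>\<^sup>+ x. indicator {x \<in> space M. t \<le> \<psi> K x} x * ennreal (h x) \<partial>M)" if "0 < t" for t
    proof (cases "t \<le> real K")
      case True
      then have "{x \<in> space M. t \<le> \<psi> K x} = {x \<in> space M. t \<le> \<phi> x}" by (auto simp: \<psi>_def)
      then show ?thesis using weak[OF that] by simp
    qed (auto simp: \<psi>_def)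
    have "(\<integral>\<^sup>+ x. ennreal ((\<psi> K x)\<^sup>2) \<partial>M) \<le> (\<integral>\<^sup>+ x. ennreal ((real K)\<^sup>2) \<partial>M)"
      using \<phi>_nonneg by (intro nn_integral_mono ennreal_leI power_mono) (auto simp: \<psi>_def)
    also have "\<dots> < \<infinity>"
      using emeasure_finite[of "space M"] by (simp add: less_top[symmetric] ennreal_mult_eq_top_iff)
    finally show "(\<integral>\<^sup>+ x. ennreal ((\<psi> K x)\<^sup>2) \<partial>M) \<noteq> \<infinity>" by simp
  qed (use \<phi>_nonneg h_nonneg in \<open>auto simp: \<psi>_def\<close>)
  have "incseq (\<lambda>K x. ennreal ((\<psi> K x)\<^sup>2))"
    using \<phi>_nonneg by (auto simp: incseq_def le_fun_def \<psi>_def intro!: ennreal_leI power_mono)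
  moreover have "ennreal ((\<phi> x)\<^sup>2) = (SUP K. ennreal ((\<psi> K x)\<^sup>2))" for x
  proof (rule antisym)
    obtain K :: nat where "\<phi> x \<le> real K" using real_arch_simple by blast
    then show "ennreal ((\<phi> x)\<^sup>2) \<le> (SUP K. ennreal ((\<psi> K x)\<^sup>2))"
      by (intro SUP_upper2[of K]) (auto simp: \<psi>_def)
    show "(SUP K. ennreal ((\<psi> K x)\<^sup>2)) \<le> ennreal ((\<phi> x)\<^sup>2)"
      using \<phi>_nonneg[of x] by (intro SUP_least ennreal_leI power_mono) (auto simp: \<psi>_def)
  qed
  ultimately have "(\<integral>\<^sup>+ x. ennreal ((\<phi> x)\<^sup>2) \<partial>M) = (SUP K. \<integral>\<^sup>+ x. ennreal ((\<psi> K x)\<^sup>2) \<partial>M)"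
    by (simp add: nn_integral_monotone_convergence_SUP)
  also have "\<dots> \<le> 4 * (\<integral>\<^sup>+ x. ennreal ((h x)\<^sup>2) \<partial>M)"
    by (intro SUP_least truncated)
  finally show ?thesis .
qed

lemma nn_integral_powr_absorb:
  fixes A \<Phi> :: "'a \<Rightarrow> real"
  assumes "1 \<le> p" and [measurable]: "A \<in> borel_measurable M" "\<Phi> \<in> borel_measurable M"
    and A_nonneg: "\<And>x. 0 \<le> A x" and \<Phi>_nonneg: "\<And>x. 0 \<le> \<Phi> x"
    and finite: "(\<integral>\<^sup>+ x. ennreal (\<Phi> x powr p) \<partial>M) \<noteq> \<infinity>"
    and step: "(\<integral>\<^sup>+ x. ennreal (\<Phi> x powr p) \<partial>M) \<le> 2 * (\<integral>\<^sup>+ x. ennreal (p * A x * \<Phi> x powr (p - 1)) \<partial>M)"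
  shows "(\<integral>\<^sup>+ x. ennreal (\<Phi> x powr p) \<partial>M) \<le> ennreal (4 * p * (4 * p) powr (p - 1)) * (\<integral>\<^sup>+ x. ennreal (A x powr p) \<partial>M)"
proof (rule ennreal_le_of_double_le_add[OF finite])
  define c where "c = 4 * p * (4 * p) powr (p - 1)"
  have young: "4 * (p * A x * \<Phi> x powr (p - 1)) \<le> c * A x powr p + \<Phi> x powr p" for x
  proof -
    have "A x * \<Phi> x powr (p - 1) \<le> (4 * p) powr (p - 1) * A x powr p + \<Phi> x powr p / (4 * p)"
      using mult_powr_le_young[of p "4 * p" "A x" "\<Phi> x"] \<open>1 \<le> p\<close> A_nonneg \<Phi>_nonneg by simp
    then have "4 * p * (A x * \<Phi> x powr (p - 1))
        \<le> 4 * p * ((4 * p) powr (p - 1) * A x powr p + \<Phi> x powr p / (4 * p))"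
      using \<open>1 \<le> p\<close> by (intro mult_left_mono) auto
    also have "\<dots> = c * A x powr p + \<Phi> x powr p"
      using \<open>1 \<le> p\<close> by (simp add: c_def distrib_left)
    finally show ?thesis by (simp add: mult.assoc)
  qed
  have "2 * (\<integral>\<^sup>+ x. ennreal (\<Phi> x powr p) \<partial>M) \<le> 4 * (\<integral>\<^sup>+ x. ennreal (p * A x * \<Phi> x powr (p - 1)) \<partial>M)"
    using mult_left_mono[OF step, of 2] by (simp add: mult.assoc[symmetric])
  also have "\<dots> = (\<integral>\<^sup>+ x. ennreal (4 * (p * A x * \<Phi> x powr (p - 1))) \<partial>M)"
    using A_nonneg \<open>1 \<le> p\<close>
    by (subst nn_integral_cmult[symmetric]) (auto intro!: nn_integral_cong simp: ennreal_mult)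
  also have "\<dots> \<le> (\<integral>\<^sup>+ x. ennreal c * ennreal (A x powr p) + ennreal (\<Phi> x powr p) \<partial>M)"
    using young \<open>1 \<le> p\<close>
    by (intro nn_integral_mono) (simp add: c_def ennreal_mult[symmetric] ennreal_plus[symmetric] del: ennreal_plus)
  also have "\<dots> = ennreal c * (\<integral>\<^sup>+ x. ennreal (A x powr p) \<partial>M) + (\<integral>\<^sup>+ x. ennreal (\<Phi> x powr p) \<partial>M)"
    by (simp add: nn_integral_add nn_integral_cmult)
  finally show "2 * (\<integral>\<^sup>+ x. ennreal (\<Phi> x powr p) \<partial>M)
      \<le> ennreal (4 * p * (4 * p) powr (p - 1)) * (\<integral>\<^sup>+ x. ennreal (A x powr p) \<partial>M) + (\<integral>\<^sup>+ x. ennreal (\<Phi> x powr p) \<partial>M)"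
    unfolding c_def .
qed

lemma nn_integral_powr_le_of_powr_step:
  fixes A \<Phi> :: "'a \<Rightarrow> real"
  assumes "0 < p" and [measurable]: "A \<in> borel_measurable M" "\<Phi> \<in> borel_measurable M"
    and A_nonneg: "\<And>x. 0 \<le> A x" and \<Phi>_nonneg: "\<And>x. 0 \<le> \<Phi> x" and "0 \<le> c" and \<Phi>_le: "\<And>x. \<Phi> x \<le> c * A x"
    and step: "(\<integral>\<^sup>+ x. ennreal (\<Phi> x powr p) \<partial>M) \<le> 2 * (\<integral>\<^sup>+ x. ennreal (powr_step p (A x) (\<Phi> x)) \<partial>M)"
  shows "(\<integral>\<^sup>+ x. ennreal (\<Phi> x powr p) \<partial>M)
    \<le> ennreal (2 + 4 * p * (4 * p) powr (p - 1)) * (\<integral>\<^sup>+ x. ennreal (A x powr p) \<partial>M)"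
proof (cases "(\<integral>\<^sup>+ x. ennreal (A x powr p) \<partial>M) = \<infinity>")
  case True
  then show ?thesis using \<open>0 < p\<close> by (simp add: ennreal_mult_top)
next
  case finite: False
  show ?thesis
  proof (cases "1 \<le> p")
    case False
    then have "(\<integral>\<^sup>+ x. ennreal (\<Phi> x powr p) \<partial>M) \<le> 2 * (\<integral>\<^sup>+ x. ennreal (A x powr p) \<partial>M)"
      using step by (simp add: powr_step_def)
    also have "\<dots> \<le> ennreal (2 + 4 * p * (4 * p) powr (p - 1)) * (\<integral>\<^sup>+ x. ennreal (A x powr p) \<partial>M)"
      using \<open>0 < p\<close> by (intro mult_right_mono) auto
    finally show ?thesis .
  next
    case True
    have "(\<integral>\<^sup>+ x. ennreal (\<Phi> x powr p) \<partial>M) \<le> (\<integral>\<^sup>+ x. ennreal (c powr p) * ennreal (A x powr p) \<partial>M)"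
      using \<Phi>_nonneg \<Phi>_le A_nonneg \<open>0 \<le> c\<close> \<open>0 < p\<close>
      by (intro nn_integral_mono) (auto simp: ennreal_mult[symmetric] powr_mult[symmetric] intro!: ennreal_leI powr_mono2)
    also have "\<dots> < \<infinity>"
      using finite by (simp add: nn_integral_cmult ennreal_mult_less_top less_top)
    finally have "(\<integral>\<^sup>+ x. ennreal (\<Phi> x powr p) \<partial>M) \<noteq> \<infinity>" by simp
    then have "(\<integral>\<^sup>+ x. ennreal (\<Phi> x powr p) \<partial>M)
        \<le> ennreal (4 * p * (4 * p) powr (p - 1)) * (\<integral>\<^sup>+ x. ennreal (A x powr p) \<partial>M)"
      using step True A_nonneg \<Phi>_nonneg by (intro nn_integral_powr_absorb) (simp_all add: powr_step_def)
    also have "\<dots> \<le> ennreal (2 + 4 * p * (4 * p) powr (p - 1)) * (\<integral>\<^sup>+ x. ennreal (A x powr p) \<partial>M)"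
      by (intro mult_right_mono ennreal_leI) auto
    finally show ?thesis .
  qed
qed

lemma (in finite_measure) integrable_of_nn_integral_power2:
  fixes h :: "'a \<Rightarrow> real"
  assumes [measurable]: "h \<in> borel_measurable M" and fin: "(\<integral>\<^sup>+ x. ennreal ((h x)\<^sup>2) \<partial>M) < \<infinity>"
  shows "integrable M h"
proof (rule integrableI_bounded)
  have "\<bar>h x\<bar> \<le> 1 + (h x)\<^sup>2" for x
  proof (cases "\<bar>h x\<bar> \<le> 1")
    case True
    then show ?thesis using zero_le_power2[of "h x"] by linarith
  next
    case False
    then have "\<bar>h x\<bar> * 1 \<le> \<bar>h x\<bar> * \<bar>h x\<bar>" by (intro mult_left_mono) auto
    then show ?thesis by (simp add: power2_eq_square abs_mult_self_eq)
  qed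
  then have "ennreal (norm (h x)) \<le> 1 + ennreal ((h x)\<^sup>2)" for x
    using ennreal_leI[of "\<bar>h x\<bar>" "1 + (h x)\<^sup>2"] by (simp add: ennreal_plus)
  then have "(\<integral>\<^sup>+ x. ennreal (norm (h x)) \<partial>M) \<le> (\<integral>\<^sup>+ x. 1 + ennreal ((h x)\<^sup>2) \<partial>M)"
    by (rule nn_integral_mono)
  also have "\<dots> < \<infinity>"
    using fin emeasure_finite[of "space M"] by (simp add: nn_integral_add less_top[symmetric])
  finally show "(\<integral>\<^sup>+ x. ennreal (norm (h x)) \<partial>M) < \<infinity>" .
qed simp

lemma nn_integral_abs_suminf_powr_le:
  fixes g a :: "nat \<Rightarrow> 'a \<Rightarrow> real"
  assumes "0 < p" and [measurable]: "\<And>k. a k \<in> borel_measurable M" and a_nonneg: "\<And>k x. 0 \<le> a k x"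
    and dom: "AE x in M. \<forall>k. \<bar>g k x\<bar> \<le> a k x"
    and partial: "\<And>n. (\<integral>\<^sup>+ x. ennreal ((\<Sum>k<n. a k x) powr p) \<partial>M) \<le> B" and "B < \<infinity>"
  shows "(AE x in M. summable (\<lambda>k. g k x)) \<and> (\<integral>\<^sup>+ x. ennreal (\<bar>\<Sum>k. g k x\<bar> powr p) \<partial>M) \<le> B"
proof -
  define \<Psi> where "\<Psi> x = (SUP n. ennreal ((\<Sum>k<n. a k x) powr p))" for x
  have "incseq (\<lambda>n x. ennreal ((\<Sum>k<n. a k x) powr p))"
    using \<open>0 < p\<close> a_nonneg
    by (auto simp: incseq_def le_fun_def intro!: ennreal_leI powr_mono2 sum_mono2 sum_nonneg)
  then have "(\<integral>\<^sup>+ x. \<Psi> x \<partial>M) = (SUP n. \<integral>\<^sup>+ x. ennreal ((\<Sum>k<n. a k x) powr p) \<partial>M)"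
    unfolding \<Psi>_def by (intro nn_integral_monotone_convergence_SUP) auto
  also have "\<dots> \<le> B" using partial by (rule SUP_least)
  finally have \<Psi>_le: "(\<integral>\<^sup>+ x. \<Psi> x \<partial>M) \<le> B" .
  then have "AE x in M. \<Psi> x \<noteq> \<infinity>"
    using \<open>B < \<infinity>\<close> unfolding \<Psi>_def by (intro nn_integral_PInf_AE) auto
  with dom have "AE x in M. summable (\<lambda>k. g k x) \<and> ennreal (\<bar>\<Sum>k. g k x\<bar> powr p) \<le> \<Psi> x"
  proof eventually_elim
    case (elim x)
    obtain c where c: "\<Psi> x = ennreal c" "0 \<le> c"
      using elim(2) by (cases "\<Psi> x" rule: ennreal_cases) auto
    have partial_c: "(\<Sum>k<n. a k x) powr p \<le> c" for n
    proof -
      have "ennreal ((\<Sum>k<n. a k x) powr p) \<le> ennreal c"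
        unfolding c(1)[symmetric] \<Psi>_def by (rule SUP_upper) simp
      then show ?thesis using c(2) by (simp add: ennreal_le_iff)
    qed
    have "summable (\<lambda>k. g k x) \<and> \<bar>\<Sum>k. g k x\<bar> powr p \<le> c"
      using summable_abs_suminf_powr_le[OF \<open>0 < p\<close>, of "\<lambda>k. g k x" "\<lambda>k. a k x" c] elim(1) partial_c
      by blast
    then show ?case using c by (simp add: ennreal_leI)
  qed
  then have "(\<integral>\<^sup>+ x. ennreal (\<bar>\<Sum>k. g k x\<bar> powr p) \<partial>M) \<le> (\<integral>\<^sup>+ x. \<Psi> x \<partial>M)"
    by (intro nn_integral_mono_AE) (auto elim: eventually_mono)
  with \<Psi>_le \<open>AE x in M. summable (\<lambda>k. g k x) \<and> _\<close> show ?thesis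
    by (auto elim: eventually_mono)
qed

lemma disjoint_family_Diff_UN_Suc: "disjoint_family (\<lambda>k. S k - (\<Union>m\<in>{Suc k..}. S m))"
  unfolding disjoint_family_on_def
proof (intro ballI impI)
  fix i j :: nat assume "i \<noteq> j"
  then show "(S i - (\<Union>m\<in>{Suc i..}. S m)) \<inter> (S j - (\<Union>m\<in>{Suc j..}. S m)) = {}"
    by (cases "i < j") (auto dest: nat_neq_iff[THEN iffD1])
qed

context finite_measure_subalgebra
begin

lemma integrable_indicator_gt:
  fixes f :: "'a \<Rightarrow> real"
  assumes [measurable]: "f \<in> borel_measurable M"
  shows "integrable M (indicator {y \<in> space M. q < f y} :: 'a \<Rightarrow> real)"
  by (rule integrable_real_indicator) (measurable, simp add: less_top[symmetric])

lemma real_cond_exp_indicator_gt_le: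
  assumes [measurable]: "f \<in> borel_measurable M"
    and int: "integrable M (\<lambda>x. \<bar>f x\<bar> powr s)" and "0 < s" "0 < q"
  shows "AE x in M. real_cond_exp M F (indicator {y \<in> space M. q < f y}) x
    \<le> real_cond_exp M F (\<lambda>x. \<bar>f x\<bar> powr s) x / q powr s"
proof -
  have "indicator {y \<in> space M. q < f y} x \<le> \<bar>f x\<bar> powr s / q powr s" for x
    using assms powr_mono2[of s q "\<bar>f x\<bar>"] by (auto simp: indicator_def)
  then have "AE x in M. real_cond_exp M F (indicator {y \<in> space M. q < f y}) x
      \<le> real_cond_exp M F (\<lambda>x. \<bar>f x\<bar> powr s / q powr s) x"
    using int integrable_indicator_gt[OF assms(1)] by (intro real_cond_exp_mono) auto
  moreover have "AE x in M. real_cond_exp M F (\<lambda>x. \<bar>f x\<bar> powr s / q powr s) x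
      = real_cond_exp M F (\<lambda>x. \<bar>f x\<bar> powr s) x / q powr s"
    using int by (rule real_cond_exp_cdiv)
  ultimately show ?thesis by eventually_elim simp
qed

lemma real_cond_exp_indicator_gt_ge:
  assumes [measurable]: "f \<in> borel_measurable M"
    and int: "integrable M (\<lambda>x. \<bar>f x\<bar> powr s)" and "0 < s" "q < 0"
  shows "AE x in M. 1 - real_cond_exp M F (\<lambda>x. \<bar>f x\<bar> powr s) x / (- q) powr s
    \<le> real_cond_exp M F (indicator {y \<in> space M. q < f y}) x"
proof -
  have "1 - \<bar>f x\<bar> powr s / (- q) powr s \<le> indicator {y \<in> space M. q < f y} x" if "x \<in> space M" for x
    using assms that powr_mono2[of s "- q" "\<bar>f x\<bar>"] by (auto simp: indicator_def)
  then have "AE x in M. real_cond_exp M F (\<lambda>x. 1 - \<bar>f x\<bar> powr s / (- q) powr s) x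
      \<le> real_cond_exp M F (indicator {y \<in> space M. q < f y}) x"
    using int integrable_indicator_gt[OF assms(1)] by (intro real_cond_exp_mono AE_I2) auto
  moreover have "AE x in M. real_cond_exp M F (\<lambda>x. 1 - \<bar>f x\<bar> powr s / (- q) powr s) x
      = real_cond_exp M F (\<lambda>x. 1) x - real_cond_exp M F (\<lambda>x. \<bar>f x\<bar> powr s / (- q) powr s) x"
    using int by (intro real_cond_exp_diff) auto
  moreover have "AE x in M. real_cond_exp M F (\<lambda>x. \<bar>f x\<bar> powr s / (- q) powr s) x
      = real_cond_exp M F (\<lambda>x. \<bar>f x\<bar> powr s) x / (- q) powr s"
    using int by (rule real_cond_exp_cdiv)
  moreover have "AE x in M. real_cond_exp M F (\<lambda>x. 1) x = 1"
    by (intro real_cond_exp_F_meas) auto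
  ultimately show ?thesis by eventually_elim simp
qed

lemma abs_rat_quantile_real_cond_exp_le:
  assumes [measurable]: "f \<in> borel_measurable M"
    and int: "integrable M (\<lambda>x. \<bar>f x\<bar> powr s)" and "0 < s" "0 < r" "r < 1"
  shows "AE x in M. \<bar>Inf {t. t \<in> \<rat> \<and> real_cond_exp M F (indicator {y \<in> space M. t < f y}) x \<le> r}\<bar>
    \<le> (max 0 (real_cond_exp M F (\<lambda>x. \<bar>f x\<bar> powr s) x) / min r (1 - r)) powr (1 / s)"
proof -
  let ?e = "\<lambda>t. real_cond_exp M F (indicator {y \<in> space M. t < f y})"
  let ?H = "real_cond_exp M F (\<lambda>x. \<bar>f x\<bar> powr s)"
  have "AE x in M. \<forall>q::rat. (0 < real_of_rat q \<longrightarrow> ?e (real_of_rat q) x \<le> ?H x / (real_of_rat q) powr s)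
      \<and> (real_of_rat q < 0 \<longrightarrow> 1 - ?H x / (- real_of_rat q) powr s \<le> ?e (real_of_rat q) x)"
    unfolding AE_all_countable
    using real_cond_exp_indicator_gt_le[OF assms(1,2,3)] real_cond_exp_indicator_gt_ge[OF assms(1,2,3)]
    by (auto intro: AE_impI simp del: of_rat_less_0_iff zero_less_of_rat_iff)
  then show ?thesis
  proof eventually_elim
    case (elim x)
    show ?case
      using \<open>0 < s\<close> \<open>0 < r\<close> \<open>r < 1\<close> elim
      by (intro abs_rat_quantile_le) (auto elim!: Rats_cases)
  qed
qed

lemma mult_emeasure_le_of_real_cond_exp_ge:
  fixes h :: "'a \<Rightarrow> real"
  assumes int: "integrable M h" and h_nonneg: "\<And>x. 0 \<le> h x" and A: "A \<in> sets F" and "0 \<le> l"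
    and ge: "\<And>x. x \<in> A \<Longrightarrow> l \<le> real_cond_exp M F h x"
  shows "ennreal l * emeasure M A \<le> (\<integral>\<^sup>+ x. indicator A x * ennreal (h x) \<partial>M)"
proof -
  have [measurable]: "A \<in> sets M" using A subalg by (auto simp: subalgebra_def)
  have "l * measure M A = (\<integral>x\<in>A. l \<partial>M)"
    by (simp add: set_integral_const)
  also have "\<dots> \<le> (\<integral>x\<in>A. real_cond_exp M F h x \<partial>M)"
    using integrable_mult_indicator[OF _ real_cond_exp_int(1)[OF int]] integrable_mult_indicator[OF _ integrable_const[of l]] ge
    by (intro set_integral_mono) (auto simp: set_integrable_def)
  also have "\<dots> = (\<integral>x. indicator A x * h x \<partial>M)"
    using real_cond_exp_intA[OF int A] by (simp add: set_lebesgue_integral_def)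
  finally have "ennreal (l * measure M A) \<le> ennreal (\<integral>x. indicator A x * h x \<partial>M)"
    by (rule ennreal_leI)
  also have "\<dots> = (\<integral>\<^sup>+ x. indicator A x * ennreal (h x) \<partial>M)"
    using integrable_mult_indicator[OF _ int] h_nonneg
    by (subst nn_integral_eq_integral[symmetric]) (auto simp: indicator_mult_ennreal)
  finally show ?thesis using \<open>0 \<le> l\<close> by (simp add: emeasure_eq_measure ennreal_mult)
qed

lemma nn_integral_indicator_le_twice_diff:
  fixes \<phi> :: "'a \<Rightarrow> ennreal"
  assumes S: "S \<in> sets F" and U: "U \<in> sets M"
    and half: "\<And>A. A \<in> sets F \<Longrightarrow> A \<subseteq> S \<Longrightarrow> 1/2 * measure M A \<le> measure M (A - U)"
    and \<phi>: "\<phi> \<in> borel_measurable F"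
  shows "(\<integral>\<^sup>+ x. indicator S x * \<phi> x \<partial>M) \<le> 2 * (\<integral>\<^sup>+ x. indicator (S - U) x * \<phi> x \<partial>M)"
proof -
  have [measurable]: "S \<in> sets M" "U \<in> sets M"
    using subalg S U by (auto simp: subalgebra_def)
  have [measurable]: "\<phi> \<in> borel_measurable M" using measurable_from_subalg[OF subalg \<phi>] .
  \<comment> \<open>compare, on the sets of F, the measures with densities 1_S and 2 * 1_(S - U)\<close>
  define f1 where "f1 x = (indicator S x :: ennreal)" for x
  define f2 where "f2 x = 2 * (indicator (S - U) x :: ennreal)" for x
  have [measurable]: "f1 \<in> borel_measurable M" "f2 \<in> borel_measurable M"
    unfolding f1_def f2_def by measurable
  have sub_density: "subalgebra (density M f) F" for f
    using subalg by (auto simp: subalgebra_def)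
  have emeasure_le: "emeasure (density M f1) A \<le> emeasure (density M f2) A" if A: "A \<in> sets F" for A
  proof -
    have [measurable]: "A \<in> sets M" using subalg A by (auto simp: subalgebra_def)
    have "emeasure (density M f1) A = measure M (A \<inter> S)"
      unfolding f1_def
      by (simp add: emeasure_density indicator_inter_arith[symmetric] emeasure_eq_measure Int_commute)
    also have "\<dots> \<le> ennreal (2 * measure M (A \<inter> (S - U)))"
      using half[of "A \<inter> S"] A S by (intro ennreal_leI) (auto simp: Int_Diff)
    also have "\<dots> = emeasure (density M f2) A"
      unfolding f2_def
      by (simp add: emeasure_density nn_integral_cmult indicator_inter_arith[symmetric]
          emeasure_eq_measure ennreal_mult Int_commute mult.assoc)
    finally show ?thesis .
  qed
  have "emeasure (restr_to_subalg (density M f1) F) A \<le> emeasure (restr_to_subalg (density M f2) F) A" for A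
    using emeasure_le[of A]
    by (cases "A \<in> sets F")
      (simp_all add: emeasure_restr_to_subalg[OF sub_density] emeasure_notin_sets sets_restr_to_subalg[OF sub_density])
  then have "restr_to_subalg (density M f1) F \<le> restr_to_subalg (density M f2) F"
    by (auto simp: le_measure_iff le_fun_def space_restr_to_subalg sets_restr_to_subalg[OF sub_density])
  then have "(\<integral>\<^sup>+ x. \<phi> x \<partial>restr_to_subalg (density M f1) F) \<le> (\<integral>\<^sup>+ x. \<phi> x \<partial>restr_to_subalg (density M f2) F)"
    by (intro nn_integral_mono_measure) (simp add: sets_restr_to_subalg[OF sub_density])
  then show ?thesis
    using \<phi> by (simp add: nn_integral_subalgebra2[OF sub_density] nn_integral_density
        f1_def f2_def nn_integral_cmult mult.assoc)
qed

end

locale filtered_prob_space = prob_space M for M :: "'a measure" +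
  fixes F :: "nat \<Rightarrow> 'a measure"
  assumes subalgebra_F: "subalgebra M (F k)"
    and sets_F_Suc: "sets (F k) \<subseteq> sets (F (Suc k))"
begin

lemma finite_measure_subalgebra_F: "finite_measure_subalgebra M (F k)"
  using subalgebra_F by unfold_locales

lemma space_F [simp]: "space (F k) = space M"
  using subalgebra_F by (simp add: subalgebra_def)

lemma sets_F_subset: "A \<in> sets (F k) \<Longrightarrow> A \<in> sets M"
  using subalgebra_F by (auto simp: subalgebra_def)

lemma sets_F_mono: "j \<le> k \<Longrightarrow> sets (F j) \<subseteq> sets (F k)"
  by (rule lift_Suc_mono_le[of "\<lambda>k. sets (F k)"]) (use sets_F_Suc in auto)

lemma measurable_F_mono: "j \<le> k \<Longrightarrow> g \<in> measurable (F j) N \<Longrightarrow> g \<in> measurable (F k) N"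
  using sets_F_mono subalgebra_F by (intro measurable_from_subalg[of "F k" "F j"]) (auto simp: subalgebra_def)

lemma maximal_ineq:
  fixes h :: "'a \<Rightarrow> real" and n :: nat
  assumes int: "integrable M h" and h_nonneg: "\<And>x. 0 \<le> h x" and "0 < l"
  shows "ennreal l * emeasure M {x \<in> space M. \<exists>k\<le>n. l \<le> real_cond_exp M (F k) h x}
    \<le> (\<integral>\<^sup>+ x. indicator {x \<in> space M. \<exists>k\<le>n. l \<le> real_cond_exp M (F k) h x} x * ennreal (h x) \<partial>M)"
proof -
  define L where "L k = {x \<in> space M. l \<le> real_cond_exp M (F k) h x}" for k
  have L_F: "L j \<in> sets (F k)" if "j \<le> k" for j k
  proof -
    have [measurable]: "real_cond_exp M (F j) h \<in> borel_measurable (F k)"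
      using measurable_F_mono[OF that borel_measurable_cond_exp] .
    show ?thesis unfolding L_def space_F[of k, symmetric] by measurable
  qed
  \<comment> \<open>disjointed L k is the event that the level is first reached at time k\<close>
  have D_F: "disjointed L k \<in> sets (F k)" for k
    unfolding disjointed_def using L_F by (intro sets.Diff sets.finite_UN) auto
  then have D_M [measurable]: "disjointed L k \<in> sets M" for k by (rule sets_F_subset)
  have level_set: "{x \<in> space M. \<exists>k\<le>n. l \<le> real_cond_exp M (F k) h x} = (\<Union>k\<in>{0..<Suc n}. disjointed L k)"
    unfolding finite_UN_disjointed_eq by (auto simp: L_def less_Suc_eq_le)
  have disj: "disjoint_family_on (disjointed L) {0..<Suc n}"
    by (rule disjoint_family_on_mono[OF _ disjoint_family_disjointed]) simp
  have "ennreal l * emeasure M (\<Union>k\<in>{0..<Suc n}. disjointed L k)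
      = ennreal l * (\<Sum>k\<in>{0..<Suc n}. emeasure M (disjointed L k))"
    using disj by (subst sum_emeasure) auto
  also have "\<dots> = (\<Sum>k\<in>{0..<Suc n}. ennreal l * emeasure M (disjointed L k))"
    by (rule sum_distrib_left)
  also have "\<dots> \<le> (\<Sum>k\<in>{0..<Suc n}. \<integral>\<^sup>+ x. indicator (disjointed L k) x * ennreal (h x) \<partial>M)"
  proof (intro sum_mono)
    fix k
    interpret finite_measure_subalgebra M "F k" by (rule finite_measure_subalgebra_F)
    show "ennreal l * emeasure M (disjointed L k) \<le> (\<integral>\<^sup>+ x. indicator (disjointed L k) x * ennreal (h x) \<partial>M)"
      using \<open>0 < l\<close> disjointed_subset[of L k]
      by (intro mult_emeasure_le_of_real_cond_exp_ge[OF int h_nonneg D_F]) (auto simp: L_def)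
  qed
  also have "\<dots> = (\<integral>\<^sup>+ x. (\<Sum>k\<in>{0..<Suc n}. indicator (disjointed L k) x * ennreal (h x)) \<partial>M)"
    using int by (intro nn_integral_sum[symmetric]) auto
  also have "\<dots> = (\<integral>\<^sup>+ x. indicator (\<Union>k\<in>{0..<Suc n}. disjointed L k) x * ennreal (h x) \<partial>M)"
    by (simp only: sum_distrib_right[symmetric] indicator_UN_disjoint[OF finite_atLeastLessThan disj])
  finally show ?thesis unfolding level_set .
qed

lemma maximal_ineq_L2:
  fixes h :: "'a \<Rightarrow> real"
  assumes int: "integrable M h" and h_nonneg: "\<And>x. 0 \<le> h x"
  shows "(\<integral>\<^sup>+ x. ennreal ((Max ((\<lambda>k. max 0 (real_cond_exp M (F k) h x)) ` {..n}))\<^sup>2) \<partial>M)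
    \<le> 4 * (\<integral>\<^sup>+ x. ennreal ((h x)\<^sup>2) \<partial>M)"
proof (rule nn_integral_square_le_four_of_weak_type)
  fix t :: real assume "0 < t"
  then have "{x \<in> space M. t \<le> Max ((\<lambda>k. max 0 (real_cond_exp M (F k) h x)) ` {..n})}
      = {x \<in> space M. \<exists>k\<le>n. t \<le> real_cond_exp M (F k) h x}"
    by (auto simp: Max_ge_iff le_max_iff_disj)
  then show "ennreal t * emeasure M {x \<in> space M. t \<le> Max ((\<lambda>k. max 0 (real_cond_exp M (F k) h x)) ` {..n})}
      \<le> (\<integral>\<^sup>+ x. indicator {x \<in> space M. t \<le> Max ((\<lambda>k. max 0 (real_cond_exp M (F k) h x)) ` {..n})} x
        * ennreal (h x) \<partial>M)"
    using maximal_ineq[OF int h_nonneg \<open>0 < t\<close>] by simp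
qed (use int h_nonneg in \<open>auto simp: Max_ge_iff\<close>)

lemma nn_integral_indicator_sparse_le:
  assumes sparse: "sparse_seq M F S" and \<phi>: "\<phi> \<in> borel_measurable (F k)"
  shows "(\<integral>\<^sup>+ x. indicator (S k) x * \<phi> x \<partial>M)
    \<le> 2 * (\<integral>\<^sup>+ x. indicator (S k - (\<Union>m\<in>{Suc k..}. S m)) x * \<phi> x \<partial>M)"
proof -
  interpret finite_measure_subalgebra M "F k" by (rule finite_measure_subalgebra_F)
  have [measurable]: "S m \<in> sets M" for m
    using sparse sets_F_subset unfolding sparse_seq_def by blast
  have "(\<Union>m\<in>{Suc k..}. S m) \<in> sets M" by measurable
  then show ?thesis
    using sparse \<phi> unfolding sparse_seq_def by (intro nn_integral_indicator_le_twice_diff) auto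
qed

lemma sparse_sum_powr_le_powr_step:
  fixes u :: "nat \<Rightarrow> 'a \<Rightarrow> real"
  assumes sparse: "sparse_seq M F S" and "0 < p"
    and u_F: "\<And>k. u k \<in> borel_measurable (F k)" and u_nonneg: "\<And>k x. 0 \<le> u k x"
  shows "(\<integral>\<^sup>+ x. ennreal ((\<Sum>k<n. indicator (S k) x * u k x) powr p) \<partial>M)
    \<le> 2 * (\<integral>\<^sup>+ x. ennreal (powr_step p (Max ((\<lambda>k. u k x) ` {..n})) (\<Sum>k<n. indicator (S k) x * u k x)) \<partial>M)"
proof -
  define \<Phi> where "\<Phi> m x = (\<Sum>k<m. indicator (S k) x * u k x)" for m x
  define b where "b k x = powr_step p (u k x) (\<Phi> (Suc k) x)" for k x
  define B where "B x = powr_step p (Max ((\<lambda>k. u k x) ` {..n})) (\<Phi> n x)" for x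
  define E where "E k = S k - (\<Union>m\<in>{Suc k..}. S m)" for k
  have S_F: "S k \<in> sets (F k)" for k using sparse by (simp add: sparse_seq_def)
  have [measurable]: "S k \<in> sets M" "u k \<in> borel_measurable M" for k
    using sets_F_subset[OF S_F] measurable_from_subalg[OF subalgebra_F u_F] by auto
  have b_F: "(\<lambda>x. ennreal (b k x)) \<in> borel_measurable (F k)" for k
  proof -
    have [measurable]: "S j \<in> sets (F k)" "u j \<in> borel_measurable (F k)" if "j \<le> k" for j
      using that sets_F_mono[of j k] S_F measurable_F_mono[OF that u_F] by auto
    show ?thesis unfolding b_def \<Phi>_def powr_step_def by measurable
  qed
  have [measurable]: "(\<lambda>x. ennreal (b k x)) \<in> borel_measurable M" "E k \<in> sets M" for k
    using measurable_from_subalg[OF subalgebra_F b_F] unfolding E_def by auto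
  have [measurable]: "(\<lambda>x. ennreal (B x)) \<in> borel_measurable M"
    unfolding B_def \<Phi>_def powr_step_def by measurable
  have b_le_B: "b k x \<le> B x" if "k < n" for k x
    unfolding b_def B_def \<Phi>_def using that u_nonneg \<open>0 < p\<close>
    by (intro powr_step_mono sum_mono2 sum_nonneg Max_ge) auto
  have "(\<integral>\<^sup>+ x. ennreal (\<Phi> n x powr p) \<partial>M) \<le> (\<integral>\<^sup>+ x. (\<Sum>k<n. indicator (S k) x * ennreal (b k x)) \<partial>M)"
  proof (rule nn_integral_mono)
    fix x
    have "ennreal (\<Phi> n x powr p) \<le> (\<Sum>k<n. ennreal (indicator (S k) x * b k x))"
      using sum_indicator_powr_le_powr_step[OF \<open>0 < p\<close>, where u="\<lambda>k. u k x" and n=n and S=S and x=x] u_nonneg \<open>0 < p\<close>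
      by (simp add: \<Phi>_def b_def ennreal_leI sum_ennreal powr_step_nonneg)
    then show "ennreal (\<Phi> n x powr p) \<le> (\<Sum>k<n. indicator (S k) x * ennreal (b k x))"
      by (simp only: indicator_mult_ennreal)
  qed
  also have "\<dots> = (\<Sum>k<n. \<integral>\<^sup>+ x. indicator (S k) x * ennreal (b k x) \<partial>M)"
    by (rule nn_integral_sum) measurable
  also have "\<dots> \<le> (\<Sum>k<n. 2 * \<integral>\<^sup>+ x. indicator (E k) x * ennreal (b k x) \<partial>M)"
    unfolding E_def by (intro sum_mono nn_integral_indicator_sparse_le[OF sparse b_F])
  also have "\<dots> \<le> (\<Sum>k<n. 2 * \<integral>\<^sup>+ x. indicator (E k) x * ennreal (B x) \<partial>M)"
    using b_le_B by (intro sum_mono mult_left_mono nn_integral_mono) (auto simp: indicator_def ennreal_leI)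
  also have "\<dots> = 2 * (\<integral>\<^sup>+ x. (\<Sum>k<n. indicator (E k) x * ennreal (B x)) \<partial>M)"
    by (subst nn_integral_sum) (measurable, simp add: sum_distrib_left)
  also have "\<dots> = 2 * (\<integral>\<^sup>+ x. indicator (\<Union>k<n. E k) x * ennreal (B x) \<partial>M)"
    using disjoint_family_Diff_UN_Suc[of S] unfolding E_def
    by (simp add: sum_distrib_right[symmetric] indicator_UN_disjoint disjoint_family_on_def)
  also have "\<dots> \<le> 2 * (\<integral>\<^sup>+ x. ennreal (B x) \<partial>M)"
    by (intro mult_left_mono nn_integral_mono) (auto simp: indicator_def)
  finally show ?thesis unfolding \<Phi>_def B_def .
qed

lemma sparse_sum_powr_le:
  fixes u :: "nat \<Rightarrow> 'a \<Rightarrow> real"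
  assumes sparse: "sparse_seq M F S" and "0 < p"
    and u_F: "\<And>k. u k \<in> borel_measurable (F k)" and u_nonneg: "\<And>k x. 0 \<le> u k x"
  shows "(\<integral>\<^sup>+ x. ennreal ((\<Sum>k<n. indicator (S k) x * u k x) powr p) \<partial>M)
    \<le> ennreal (2 + 4 * p * (4 * p) powr (p - 1)) * (\<integral>\<^sup>+ x. ennreal ((Max ((\<lambda>k. u k x) ` {..n})) powr p) \<partial>M)"
proof (rule nn_integral_powr_le_of_powr_step[OF \<open>0 < p\<close> _ _ _ _ _ _
      sparse_sum_powr_le_powr_step[OF sparse \<open>0 < p\<close> u_F u_nonneg]])
  have [measurable]: "S k \<in> sets M" "u k \<in> borel_measurable M" for k
    using sparse sets_F_subset measurable_from_subalg[OF subalgebra_F u_F] by (auto simp: sparse_seq_def)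
  show "(\<lambda>x. Max ((\<lambda>k. u k x) ` {..n})) \<in> borel_measurable M"
    "(\<lambda>x. \<Sum>k<n. indicator (S k) x * u k x) \<in> borel_measurable M"
    by measurable
  show "0 \<le> Max ((\<lambda>k. u k x) ` {..n})" for x
    using u_nonneg[of 0 x] by (auto intro: order_trans[OF _ Max_ge])
  show "(\<Sum>k<n. indicator (S k) x * u k x) \<le> real n * Max ((\<lambda>k. u k x) ` {..n})" for x
  proof -
    have "(\<Sum>k<n. indicator (S k) x * u k x) \<le> (\<Sum>k<n. Max ((\<lambda>k. u k x) ` {..n}))"
      using u_nonneg[of 0 x] by (intro sum_mono) (auto simp: indicator_def intro: order_trans[OF _ Max_ge])
    then show ?thesis by simp
  qed
qed (use u_nonneg in \<open>auto intro: sum_nonneg\<close>)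

lemma abs_Pr_op_le:
  fixes f :: "'a \<Rightarrow> real"
  assumes [measurable]: "f \<in> borel_measurable M" and int: "integrable M (\<lambda>x. \<bar>f x\<bar> powr s)"
    and "0 < s" "0 < r" "r < 1"
  shows "AE x in M. \<forall>k. \<bar>Pr_op M F r k f x\<bar>
    \<le> (max 0 (real_cond_exp M (F k) (\<lambda>x. \<bar>f x\<bar> powr s) x) / min r (1 - r)) powr (1 / s)"
  unfolding AE_all_countable
proof
  fix k
  interpret finite_measure_subalgebra M "F k" by (rule finite_measure_subalgebra_F)
  show "AE x in M. \<bar>Pr_op M F r k f x\<bar>
      \<le> (max 0 (real_cond_exp M (F k) (\<lambda>x. \<bar>f x\<bar> powr s) x) / min r (1 - r)) powr (1 / s)"
    using abs_rat_quantile_real_cond_exp_le[OF assms] by (simp add: Pr_op_def)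
qed

lemma sparse_sum_cond_exp_powr_le:
  fixes h :: "'a \<Rightarrow> real"
  assumes sparse: "sparse_seq M F S" and int: "integrable M h" and h_nonneg: "\<And>x. 0 \<le> h x"
    and "0 < p" "0 < \<rho>"
  defines "u k x \<equiv> (max 0 (real_cond_exp M (F k) h x) / \<rho>) powr (2 / p)"
  shows "(\<integral>\<^sup>+ x. ennreal ((\<Sum>k<n. indicator (S k) x * u k x) powr p) \<partial>M)
    \<le> ennreal (4 * (2 + 4 * p * (4 * p) powr (p - 1)) / \<rho>\<^sup>2) * (\<integral>\<^sup>+ x. ennreal ((h x)\<^sup>2) \<partial>M)"
proof -
  define C where "C = 2 + 4 * p * (4 * p) powr (p - 1)"
  define w where "w k x = max 0 (real_cond_exp M (F k) h x)" for k x
  have "0 < C" using \<open>0 < p\<close> by (simp add: C_def add_pos_nonneg)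
  have [measurable]: "w k \<in> borel_measurable M" for k unfolding w_def by measurable
  have u_F: "u k \<in> borel_measurable (F k)" for k unfolding u_def by measurable
  have Max_u: "(Max ((\<lambda>k. u k x) ` {..n})) powr p \<le> 1 / \<rho>\<^sup>2 * (Max ((\<lambda>k. w k x) ` {..n}))\<^sup>2" for x
  proof -
    have "Max ((\<lambda>k. u k x) ` {..n}) \<in> (\<lambda>k. u k x) ` {..n}" by (rule Max_in) auto
    then obtain j where j: "Max ((\<lambda>k. u k x) ` {..n}) = u j x" and "j \<in> {..n}" by (rule imageE)
    have "u j x powr p = (w j x / \<rho>)\<^sup>2"
      using \<open>0 < p\<close> \<open>0 < \<rho>\<close> by (simp add: u_def w_def powr_powr powr_realpow)
    also have "\<dots> \<le> (Max ((\<lambda>k. w k x) ` {..n}) / \<rho>)\<^sup>2"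
      using \<open>j \<in> {..n}\<close> \<open>0 < \<rho>\<close> by (intro power_mono divide_right_mono Max_ge) (auto simp: w_def)
    finally show ?thesis using j by (simp add: power_divide)
  qed
  have "(\<integral>\<^sup>+ x. ennreal ((\<Sum>k<n. indicator (S k) x * u k x) powr p) \<partial>M)
      \<le> ennreal C * (\<integral>\<^sup>+ x. ennreal ((Max ((\<lambda>k. u k x) ` {..n})) powr p) \<partial>M)"
    unfolding C_def by (rule sparse_sum_powr_le[OF sparse \<open>0 < p\<close> u_F]) (simp add: u_def)
  also have "\<dots> \<le> ennreal C * (\<integral>\<^sup>+ x. ennreal (1 / \<rho>\<^sup>2) * ennreal ((Max ((\<lambda>k. w k x) ` {..n}))\<^sup>2) \<partial>M)"
    using Max_u by (intro mult_left_mono nn_integral_mono) (simp_all add: ennreal_mult[symmetric] ennreal_leI)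
  also have "\<dots> = ennreal C * (ennreal (1 / \<rho>\<^sup>2) * (\<integral>\<^sup>+ x. ennreal ((Max ((\<lambda>k. w k x) ` {..n}))\<^sup>2) \<partial>M))"
    by (subst nn_integral_cmult) measurable
  also have "\<dots> \<le> ennreal C * (ennreal (1 / \<rho>\<^sup>2) * (4 * (\<integral>\<^sup>+ x. ennreal ((h x)\<^sup>2) \<partial>M)))"
    using maximal_ineq_L2[OF int h_nonneg] unfolding w_def by (intro mult_left_mono) simp_all
  also have "\<dots> = ennreal (4 * C / \<rho>\<^sup>2) * (\<integral>\<^sup>+ x. ennreal ((h x)\<^sup>2) \<partial>M)"
  proof -
    have "ennreal (4 * C / \<rho>\<^sup>2) = 4 * (ennreal C * ennreal (1 / \<rho>\<^sup>2))"
      using \<open>0 < C\<close> by (simp add: ennreal_mult[symmetric] del: ennreal_mult ennreal_mult' ennreal_mult'')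
        (simp add: ennreal_mult'' divide_inverse mult.assoc)
    then show ?thesis by (simp add: ac_simps)
  qed
  finally show ?thesis unfolding C_def .
qed

lemma sparse_op_powr_le:
  fixes f :: "'a \<Rightarrow> real"
  assumes sparse: "sparse_seq M F S" and [measurable]: "f \<in> borel_measurable M"
    and f_Lp: "(\<integral>\<^sup>+ x. ennreal (\<bar>f x\<bar> powr p) \<partial>M) < \<infinity>" and "0 < p" "0 < r" "r < 1"
  shows "(AE x in M. summable (\<lambda>k. indicator (S k) x * Pr_op M F r k f x)) \<and>
    (\<integral>\<^sup>+ x. ennreal (\<bar>sparse_op M F r S f x\<bar> powr p) \<partial>M)
      \<le> ennreal (4 * (2 + 4 * p * (4 * p) powr (p - 1)) / (min r (1 - r))\<^sup>2)
        * (\<integral>\<^sup>+ x. ennreal (\<bar>f x\<bar> powr p) \<partial>M)"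
    (is "_ \<and> _ \<le> ?B")
proof -
  define h where "h x = \<bar>f x\<bar> powr (p / 2)" for x
  define u where "u k x = (max 0 (real_cond_exp M (F k) h x) / min r (1 - r)) powr (2 / p)" for k x
  have [measurable]: "h \<in> borel_measurable M" unfolding h_def by measurable
  have h_sq: "(h x)\<^sup>2 = \<bar>f x\<bar> powr p" for x
    unfolding h_def by (simp add: power2_eq_square powr_add[symmetric])
  have h_nonneg: "0 \<le> h x" for x unfolding h_def by simp
  have int_h: "integrable M h"
    using f_Lp by (intro integrable_of_nn_integral_power2) (simp_all add: h_sq)
  have [measurable]: "S k \<in> sets M" "u k \<in> borel_measurable M" for k
    using sparse sets_F_subset unfolding sparse_seq_def u_def by auto
  show ?thesis
    unfolding sparse_op_def
  proof (rule nn_integral_abs_suminf_powr_le[where a="\<lambda>k x. indicator (S k) x * u k x"])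
    show "AE x in M. \<forall>k. \<bar>indicator (S k) x * Pr_op M F r k f x\<bar> \<le> indicator (S k) x * u k x"
      using abs_Pr_op_le[of f "p / 2" r] int_h \<open>0 < p\<close> \<open>0 < r\<close> \<open>r < 1\<close>
      by (auto simp: h_def[abs_def] u_def indicator_def elim!: eventually_mono)
    show "(\<integral>\<^sup>+ x. ennreal ((\<Sum>k<n. indicator (S k) x * u k x) powr p) \<partial>M) \<le> ?B" for n
      using sparse_sum_cond_exp_powr_le[OF sparse int_h h_nonneg \<open>0 < p\<close>, of "min r (1 - r)" n]
        \<open>0 < r\<close> \<open>r < 1\<close> by (simp add: h_def[symmetric] h_sq u_def)
    show "?B < \<infinity>" using f_Lp by (simp add: ennreal_mult_less_top)
  qed (simp_all add: \<open>0 < p\<close> u_def)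
qed

end

theorem lemma2p4:
  fixes M :: "'a measure" and F :: "nat \<Rightarrow> 'a measure" and p r :: real
  assumes "prob_space M"
    and "generating_filtration M F"
    and "regular_filtration M F"
    and "0 < p" and "0 < r" and "r < 1"
  shows "\<exists>C>0. \<forall>S f. sparse_seq M F S \<and> f \<in> borel_measurable M \<and>
            (\<integral>\<^sup>+ x. ennreal (\<bar>f x\<bar> powr p) \<partial>M) < \<infinity> \<longrightarrow>
            (AE x in M. summable (\<lambda>k. indicator (S k) x * Pr_op M F r k f x)) \<and>
            (\<integral>\<^sup>+ x. ennreal (\<bar>sparse_op M F r S f x\<bar> powr p) \<partial>M)
              \<le> ennreal C * (\<integral>\<^sup>+ x. ennreal (\<bar>f x\<bar> powr p) \<partial>M)"
proof -
  interpret filtered_prob_space M F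
    using assms(1,2) by (simp add: filtered_prob_space_def filtered_prob_space_axioms_def generating_filtration_def)
  have "0 < 4 * (2 + 4 * p * (4 * p) powr (p - 1)) / (min r (1 - r))\<^sup>2"
    using assms(4-6) by (simp add: add_pos_nonneg)
  then show ?thesis
    using sparse_op_powr_le[OF _ _ _ assms(4-6)] by blast
qed

end
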